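(* Let $K\ge1$ be an integer and $m>0$. For $x>0$ define $$g_{\mathbf 0}(x)=\int_{\{(t_1,\dots,t_K)\in[0,\infty)^K:\ \prod_{k=1}^K(1+t_k)\le x\}}\prod_{k=1}^K t_k^{m-1}\,dt_1\cdots dt_K .$$ Then $\mathcal R\mapsto g_{\mathbf 0}(2^{\mathcal R})$ is a monotonically increasing function of $\mathcal R>0$, it is convex in $\mathcal R$ whenever $m\ge1$, and consequently $C(\mathcal R)=\big(g_{\mathbf 0}(2^{\mathcal R})\big)^{-1/(mK)}$ is a monotonically decreasing function of $\mathcal R>0$. *)

theory Defs
  imports "HOL-Analysis.Analysis"
begin

definition g0 :: "nat \<Rightarrow> real \<Rightarrow> real \<Rightarrow> real" where
  "g0 K m x =
     (\<integral>t. indicator {t. (\<forall>k<K. 0 \<le> t k) \<and> (\<Prod>k<K. 1 + t k) \<le> x} t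
            * (\<Prod>k<K. t k powr (m - 1)) \<partial>(\<Pi>\<^sub>M k\<in>{..<K}. lborel))"

end

theory Submission
  imports Defs
begin

text \<open>Integrate out the last coordinate first. For fixed \<open>t\<^sub>1, \<dots>, t\<^sub>K\<^sub>-\<^sub>1 \<ge> 0\<close> with
  \<open>P = \<Prod>(1 + t\<^sub>k)\<close>, the admissible last coordinates form the interval \<open>[0, x/P - 1]\<close>, so the
  inner integral is \<open>\<psi>(x/P) = max (x/P - 1) 0 ^ m / m\<close> and
  \<open>g\<^sub>0(2\<^sup>R) = \<integral> w(t) \<psi>(2\<^sup>R / P(t)) dt\<close> with a nonnegative weight \<open>w\<close>.
  Monotonicity and convexity in \<open>R\<close> now hold pointwise under the integral: \<open>\<psi>\<close> is nondecreasing,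
  and for \<open>m \<ge> 1\<close> it is convex, so its composition with the convex map \<open>R \<mapsto> 2\<^sup>R / P\<close> is convex.
  For \<open>R > 0\<close> the integrand is positive on a small box at the origin, hence \<open>g\<^sub>0(2\<^sup>R) > 0\<close>, and
  a negative power of this positive nondecreasing function is nonincreasing.\<close>

lemma convex_on_compose_mono_on:
  fixes f :: "'a::real_vector \<Rightarrow> real" and g :: "real \<Rightarrow> real"
  assumes "convex_on S f" "f ` S \<subseteq> T" "convex T" "convex_on T g" "mono_on T g"
  shows "convex_on S (\<lambda>x. g (f x))"
proof (rule convex_onI)
  show "convex S" using assms(1) by (rule convex_on_imp_convex)
  fix u :: real and x y assume u: "0 < u" "u < 1" and xy: "x \<in> S" "y \<in> S"
  then have fxy: "f x \<in> T" "f y \<in> T" using assms(2) by auto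
  have "(1 - u) * f x + u * f y \<in> T"
    using convexD[OF assms(3) fxy, of "1 - u" u] u by simp
  moreover have "(1 - u) *\<^sub>R x + u *\<^sub>R y \<in> S"
    using convexD[OF convex_on_imp_convex[OF assms(1)] xy, of "1 - u" u] u by simp
  ultimately have "g (f ((1 - u) *\<^sub>R x + u *\<^sub>R y)) \<le> g ((1 - u) * f x + u * f y)"
    using convex_onD[OF assms(1), of u x y] u xy assms(2) by (intro mono_onD[OF assms(5)]) auto
  also have "\<dots> \<le> (1 - u) * g (f x) + u * g (f y)"
    using convex_onD[OF assms(4), of u "f x" "f y"] u fxy by simp
  finally show "g (f ((1 - u) *\<^sub>R x + u *\<^sub>R y)) \<le> (1 - u) * g (f x) + u * g (f y)" .
qed

lemma convex_on_powr_nonneg: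
  assumes "p \<ge> 1"
  shows "convex_on {0::real..} (\<lambda>x. x powr p)"
proof (rule convex_on_linorderI)
  show "convex {0::real..}" by (rule convex_real_interval)
  fix u x y :: real assume u: "0 < u" "u < 1" and xy: "x \<in> {0..}" "y \<in> {0..}" "x < y"
  show "((1 - u) *\<^sub>R x + u *\<^sub>R y) powr p \<le> (1 - u) * x powr p + u * y powr p"
  proof (cases "x = 0")
    case True
    have "u powr p \<le> u powr 1" using u assms by (intro powr_mono') auto
    then have "u powr p * y powr p \<le> u * y powr p" using u by (intro mult_right_mono) auto
    then show ?thesis using True u xy by (simp add: powr_mult)
  next
    case False
    then show ?thesis using convex_onD[OF powr_convex[OF assms], of u x y] u xy by simp
  qed
qed

lemma convex_on_max_diff_0: "convex_on UNIV (\<lambda>y::real. max (y - c) 0)"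
proof (rule convex_onI)
  fix u x y :: real assume u: "0 < u" "u < 1"
  have "(1 - u) * x + u * y - c = (1 - u) * (x - c) + u * (y - c)" by (simp add: algebra_simps)
  also have "\<dots> \<le> (1 - u) * max (x - c) 0 + u * max (y - c) 0"
    using u by (intro add_mono mult_left_mono) auto
  finally show "max ((1 - u) *\<^sub>R x + u *\<^sub>R y - c) 0 \<le> (1 - u) * max (x - c) 0 + u * max (y - c) 0"
    using u by simp
qed simp

lemma convex_on_two_powr: "convex_on UNIV (\<lambda>x::real. 2 powr x)"
  by (intro f''_ge0_imp_convex derivative_eq_intros | simp)+

lemma antimono_on_powr_nonpos:
  fixes f :: "'a::order \<Rightarrow> real"
  assumes "mono_on S f" "\<And>x. x \<in> S \<Longrightarrow> 0 < f x" "a \<le> 0"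
  shows "antimono_on S (\<lambda>x. f x powr a)"
  using assms by (intro monotone_onI powr_mono2') (auto dest: mono_onD)

lemma convex_on_integral:
  fixes f :: "'b::real_vector \<Rightarrow> 'a \<Rightarrow> real"
  assumes "convex S" "\<And>x. x \<in> S \<Longrightarrow> integrable M (f x)"
    and "\<And>t. t \<in> space M \<Longrightarrow> convex_on S (\<lambda>x. f x t)"
  shows "convex_on S (\<lambda>x. \<integral>t. f x t \<partial>M)"
proof (rule convex_onI)
  fix u :: real and x y assume u: "0 < u" "u < 1" and xy: "x \<in> S" "y \<in> S"
  have "(1 - u) *\<^sub>R x + u *\<^sub>R y \<in> S"
    using convexD[OF assms(1) xy, of "1 - u" u] u by simp
  then have "(\<integral>t. f ((1 - u) *\<^sub>R x + u *\<^sub>R y) t \<partial>M) \<le> (\<integral>t. (1 - u) * f x t + u * f y t \<partial>M)"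
    using assms(2,3) xy u by (intro integral_mono) (auto intro!: convex_onD[of S])
  also have "\<dots> = (1 - u) * (\<integral>t. f x t \<partial>M) + u * (\<integral>t. f y t \<partial>M)"
    using assms(2) xy by simp
  finally show "(\<integral>t. f ((1 - u) *\<^sub>R x + u *\<^sub>R y) t \<partial>M) \<le> (1 - u) * (\<integral>t. f x t \<partial>M) + u * (\<integral>t. f y t \<partial>M)" .
qed fact

lemma mono_on_integral:
  fixes f :: "'b::order \<Rightarrow> 'a \<Rightarrow> real"
  assumes "\<And>x. x \<in> S \<Longrightarrow> integrable M (f x)"
    and "\<And>t. t \<in> space M \<Longrightarrow> mono_on S (\<lambda>x. f x t)"
  shows "mono_on S (\<lambda>x. \<integral>t. f x t \<partial>M)"
  using assms by (intro mono_onI integral_mono) (auto dest: mono_onD)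

lemma integral_pos_of_pos_on_nonnull:
  fixes f :: "'a \<Rightarrow> real"
  assumes "integrable M f" "\<And>x. x \<in> space M \<Longrightarrow> 0 \<le> f x"
    and "B \<in> sets M" "emeasure M B \<noteq> 0" "\<And>x. x \<in> B \<Longrightarrow> 0 < f x"
  shows "0 < integral\<^sup>L M f"
proof -
  have "integral\<^sup>L M f \<noteq> 0"
  proof
    assume "integral\<^sup>L M f = 0"
    then have "AE x in M. f x = 0"
      using assms(1,2) by (simp add: integral_nonneg_eq_0_iff_AE)
    then have "AE x in M. x \<notin> B"
      by (rule AE_mp) (use assms(5) in \<open>fastforce intro!: AE_I2\<close>)
    then have "emeasure M {x \<in> space M. x \<in> B} = 0"
      by (rule emeasure_eq_0_AE)
    moreover have "{x \<in> space M. x \<in> B} = B"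
      using sets.sets_into_space[OF assms(3)] by blast
    ultimately show False using assms(4) by simp
  qed
  moreover have "0 \<le> integral\<^sup>L M f"
    using assms(2) by (rule Bochner_Integration.integral_nonneg)
  ultimately show ?thesis by simp
qed

lemma has_bochner_integral_powr_Icc:
  fixes c m :: real
  assumes "c \<ge> 0" "m > 0"
  shows "has_bochner_integral lborel (\<lambda>y. indicator {0..c} y * y powr (m - 1)) (c powr m / m)"
proof -
  have "((\<lambda>y. y powr (m - 1)) has_integral (c powr m / m)) {0..c}"
    using has_integral_powr_from_0[of "m - 1" c] assms by simp
  then have "integral\<^sup>N lborel (\<lambda>y. indicator {0..c} y * y powr (m - 1)) = c powr m / m"
    by (intro nn_integral_has_integral_lebesgue) simp
  then show ?thesis
    using assms by (intro has_bochner_integral_nn_integral) auto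
qed

interpretation lborel_PiM: product_sigma_finite "\<lambda>_::nat. lborel :: real measure"
  by standard

lemma integrable_PiM_prod_powr_Icc:
  fixes n :: nat and c m :: real
  assumes "c \<ge> 0" "m > 0"
  shows "integrable (\<Pi>\<^sub>M k\<in>{..<n}. lborel) (\<lambda>t. \<Prod>k<n. indicator {0..c} (t k) * t k powr (m - 1))"
  by (rule lborel_PiM.product_integrable_prod)
    (auto intro: integrable.intros[OF has_bochner_integral_powr_Icc[OF assms]])

definition g0_integrand :: "nat \<Rightarrow> real \<Rightarrow> real \<Rightarrow> (nat \<Rightarrow> real) \<Rightarrow> real" where
  "g0_integrand K m x t =
     indicator {t. (\<forall>k<K. 0 \<le> t k) \<and> (\<Prod>k<K. 1 + t k) \<le> x} t * (\<Prod>k<K. t k powr (m - 1))"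

definition powr_weight :: "nat \<Rightarrow> real \<Rightarrow> (nat \<Rightarrow> real) \<Rightarrow> real" where
  "powr_weight n m t = (\<Prod>k<n. indicator {0..} (t k) * t k powr (m - 1))"

definition shifted_prod :: "nat \<Rightarrow> (nat \<Rightarrow> real) \<Rightarrow> real" where
  "shifted_prod n t = (\<Prod>k<n. 1 + t k)"

text \<open>\<open>slice_mass m (x / p)\<close> is the integral of \<open>s powr (m - 1)\<close> over \<open>{s \<ge> 0. (1 + s) p \<le> x}\<close>.\<close>

definition slice_mass :: "real \<Rightarrow> real \<Rightarrow> real" where
  "slice_mass m y = max (y - 1) 0 powr m / m"

definition slice_integrand :: "nat \<Rightarrow> real \<Rightarrow> real \<Rightarrow> (nat \<Rightarrow> real) \<Rightarrow> real" where
  "slice_integrand n m x t = powr_weight n m t * slice_mass m (x / shifted_prod n t)"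

lemma g0_eq_integral: "g0 K m x = (\<integral>t. g0_integrand K m x t \<partial>(\<Pi>\<^sub>M k\<in>{..<K}. lborel))"
  unfolding g0_def g0_integrand_def ..

lemma g0_integrand_measurable [measurable]:
  "g0_integrand K m x \<in> borel_measurable (\<Pi>\<^sub>M k\<in>{..<K}. lborel)"
proof -
  have "{t. (\<forall>k<K. 0 \<le> t k) \<and> (\<Prod>k<K. 1 + t k) \<le> x} \<inter> space (\<Pi>\<^sub>M k\<in>{..<K}. (lborel::real measure))
     = {t. \<forall>k\<in>{..<K}. 0 \<le> t k} \<inter> {t. (\<Prod>k<K. 1 + t k) \<le> x} \<inter> space (\<Pi>\<^sub>M k\<in>{..<K}. lborel)"
    by auto
  also have "\<dots> \<in> sets (\<Pi>\<^sub>M k\<in>{..<K}. lborel)"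
    by measurable
  finally have [measurable]: "{t. (\<forall>k<K. 0 \<le> t k) \<and> (\<Prod>k<K. 1 + t k) \<le> x}
      \<inter> space (\<Pi>\<^sub>M k\<in>{..<K}. (lborel::real measure)) \<in> sets (\<Pi>\<^sub>M k\<in>{..<K}. lborel)" .
  show ?thesis unfolding g0_integrand_def by measurable
qed

lemma slice_integrand_measurable [measurable]:
  "slice_integrand n m x \<in> borel_measurable (\<Pi>\<^sub>M k\<in>{..<n}. lborel)"
  unfolding slice_integrand_def powr_weight_def shifted_prod_def slice_mass_def by measurable

lemma coordinate_le_shifted_prod:
  assumes "\<forall>k<n. 0 \<le> t k" "j < n"
  shows "1 + t j \<le> shifted_prod n t"
  using prod_mono2[of "{..<n}" "{j}" "\<lambda>k. 1 + t k"] assms unfolding shifted_prod_def by auto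

lemma shifted_prod_ge_1: "\<forall>k<n. 0 \<le> t k \<Longrightarrow> 1 \<le> shifted_prod n t"
  unfolding shifted_prod_def by (intro prod_ge_1) auto

lemma powr_weight_nonneg: "0 \<le> powr_weight n m t"
  unfolding powr_weight_def by (intro prod_nonneg) (auto simp: indicator_def)

lemma powr_weight_eq_0: "\<not> (\<forall>k<n. 0 \<le> t k) \<Longrightarrow> powr_weight n m t = 0"
  unfolding powr_weight_def by (auto simp: indicator_def intro!: prod_zero)

lemma powr_weight_eq_prod_Icc:
  assumes "\<forall>k<n. 0 \<le> t k" "shifted_prod n t \<le> c"
  shows "powr_weight n m t = (\<Prod>k<n. indicator {0..c} (t k) * t k powr (m - 1))"
  unfolding powr_weight_def
proof (intro prod.cong refl)
  fix k assume "k \<in> {..<n}"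
  then have "t k \<in> {0..c}"
    using coordinate_le_shifted_prod[OF assms(1), of k] assms by auto
  then show "indicator {0..} (t k) * t k powr (m - 1) = indicator {0..c} (t k) * t k powr (m - 1)"
    by simp
qed

lemma slice_mass_nonneg: "m > 0 \<Longrightarrow> 0 \<le> slice_mass m y"
  unfolding slice_mass_def by simp

lemma slice_mass_mono: "m > 0 \<Longrightarrow> y \<le> y' \<Longrightarrow> slice_mass m y \<le> slice_mass m y'"
  unfolding slice_mass_def by (intro divide_right_mono powr_mono2) auto

lemma slice_mass_pos: "m > 0 \<Longrightarrow> y > 1 \<Longrightarrow> 0 < slice_mass m y"
  unfolding slice_mass_def by simp

lemma slice_mass_eq_0: "y \<le> 1 \<Longrightarrow> slice_mass m y = 0"
  unfolding slice_mass_def by simp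

lemma slice_integrand_nonneg: "m > 0 \<Longrightarrow> 0 \<le> slice_integrand n m x t"
  unfolding slice_integrand_def using powr_weight_nonneg slice_mass_nonneg by simp

lemma integrable_g0_integrand:
  assumes "m > 0"
  shows "integrable (\<Pi>\<^sub>M k\<in>{..<K}. lborel) (g0_integrand K m x)"
proof (rule Bochner_Integration.integrable_bound[OF integrable_PiM_prod_powr_Icc[of "\<bar>x\<bar>" m K]])
  show "AE t in \<Pi>\<^sub>M k\<in>{..<K}. lborel. norm (g0_integrand K m x t)
      \<le> norm (\<Prod>k<K. indicator {0..\<bar>x\<bar>} (t k) * t k powr (m - 1))"
  proof (rule AE_I2)
    fix t :: "nat \<Rightarrow> real"
    show "norm (g0_integrand K m x t) \<le> norm (\<Prod>k<K. indicator {0..\<bar>x\<bar>} (t k) * t k powr (m - 1))"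
    proof (cases "(\<forall>k<K. 0 \<le> t k) \<and> shifted_prod K t \<le> x")
      case True
      then have "powr_weight K m t = (\<Prod>k<K. indicator {0..\<bar>x\<bar>} (t k) * t k powr (m - 1))"
        by (intro powr_weight_eq_prod_Icc) auto
      moreover have "g0_integrand K m x t = powr_weight K m t"
        using True unfolding g0_integrand_def powr_weight_def shifted_prod_def
        by (auto intro!: prod.cong)
      ultimately show ?thesis by simp
    qed (auto simp: g0_integrand_def shifted_prod_def)
  qed
qed (use assms in auto)

lemma g0_integrand_fun_upd:
  assumes "m > 0"
  shows "g0_integrand (Suc n) m x (t(n := y))
       = powr_weight n m t * (indicator {0..max (x / shifted_prod n t - 1) 0} y * y powr (m - 1))"
proof (cases "\<forall>k<n. 0 \<le> t k")
  case False
  then show ?thesis by (auto simp: g0_integrand_def powr_weight_eq_0 indicator_def)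
next
  case nonneg: True
  have P: "1 \<le> shifted_prod n t" using shifted_prod_ge_1[OF nonneg] .
  have weight: "powr_weight n m t = (\<Prod>k<n. t k powr (m - 1))"
    unfolding powr_weight_def using nonneg by (intro prod.cong) (auto simp: indicator_def)
  have "(\<Prod>k<Suc n. 1 + (t(n := y)) k) \<le> x \<longleftrightarrow> y \<le> x / shifted_prod n t - 1"
    using P by (simp add: lessThan_Suc shifted_prod_def field_simps)
  moreover have "(\<forall>k<Suc n. 0 \<le> (t(n := y)) k) \<longleftrightarrow> 0 \<le> y"
    using nonneg by (auto simp: less_Suc_eq)
  \<comment> \<open>The two indicators may differ at \<open>y = 0\<close> only, where \<open>0 powr (m - 1) = 0\<close>.\<close>
  ultimately show ?thesis
    by (cases "0 < y") (auto simp: g0_integrand_def weight lessThan_Suc indicator_def)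
qed

lemma g0_Suc_eq_integral_slice_integrand:
  assumes "m > 0"
  shows "g0 (Suc n) m x = (\<integral>t. slice_integrand n m x t \<partial>(\<Pi>\<^sub>M k\<in>{..<n}. lborel))"
proof -
  have PiM_Suc: "(\<Pi>\<^sub>M k\<in>{..<Suc n}. lborel) = (\<Pi>\<^sub>M k\<in>insert n {..<n}. (lborel::real measure))"
    by (simp add: lessThan_Suc)
  have "g0 (Suc n) m x = (\<integral>t. g0_integrand (Suc n) m x t \<partial>(\<Pi>\<^sub>M k\<in>insert n {..<n}. lborel))"
    unfolding g0_eq_integral PiM_Suc ..
  also have "\<dots> = (\<integral>t. (\<integral>y. g0_integrand (Suc n) m x (t(n := y)) \<partial>lborel) \<partial>(\<Pi>\<^sub>M k\<in>{..<n}. lborel))"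
    using integrable_g0_integrand[OF assms, of "Suc n" x] unfolding PiM_Suc
    by (intro lborel_PiM.product_integral_insert) auto
  also have "\<dots> = (\<integral>t. slice_integrand n m x t \<partial>(\<Pi>\<^sub>M k\<in>{..<n}. lborel))"
  proof (intro Bochner_Integration.integral_cong refl)
    fix t :: "nat \<Rightarrow> real"
    have "(\<integral>y. g0_integrand (Suc n) m x (t(n := y)) \<partial>lborel)
        = powr_weight n m t * (max (x / shifted_prod n t - 1) 0 powr m / m)"
      unfolding g0_integrand_fun_upd[OF assms]
      using has_bochner_integral_integral_eq[OF has_bochner_integral_powr_Icc[OF _ assms]] by simp
    then show "(\<integral>y. g0_integrand (Suc n) m x (t(n := y)) \<partial>lborel) = slice_integrand n m x t"
      by (simp add: slice_integrand_def slice_mass_def)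
  qed
  finally show ?thesis .
qed

lemma integrable_slice_integrand:
  assumes "m > 0"
  shows "integrable (\<Pi>\<^sub>M k\<in>{..<n}. lborel) (slice_integrand n m x)"
proof (rule Bochner_Integration.integrable_bound)
  show "integrable (\<Pi>\<^sub>M k\<in>{..<n}. lborel)
      (\<lambda>t. slice_mass m \<bar>x\<bar> * (\<Prod>k<n. indicator {0..\<bar>x\<bar>} (t k) * t k powr (m - 1)))"
    using integrable_PiM_prod_powr_Icc[OF _ assms] by simp
  show "AE t in \<Pi>\<^sub>M k\<in>{..<n}. lborel. norm (slice_integrand n m x t)
      \<le> norm (slice_mass m \<bar>x\<bar> * (\<Prod>k<n. indicator {0..\<bar>x\<bar>} (t k) * t k powr (m - 1)))"
  proof (rule AE_I2)
    fix t :: "nat \<Rightarrow> real"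
    have bound_nonneg: "0 \<le> slice_mass m \<bar>x\<bar> * (\<Prod>k<n. indicator {0..\<bar>x\<bar>} (t k) * t k powr (m - 1))"
      using assms by (intro mult_nonneg_nonneg slice_mass_nonneg prod_nonneg) auto
    show "norm (slice_integrand n m x t)
        \<le> norm (slice_mass m \<bar>x\<bar> * (\<Prod>k<n. indicator {0..\<bar>x\<bar>} (t k) * t k powr (m - 1)))"
    proof (cases "(\<forall>k<n. 0 \<le> t k) \<and> 1 < x / shifted_prod n t")
      case True
      then have P: "1 \<le> shifted_prod n t" "shifted_prod n t \<le> \<bar>x\<bar>"
        using shifted_prod_ge_1[of n t] by (auto simp: field_simps)
      have "\<bar>x\<bar> * 1 \<le> \<bar>x\<bar> * shifted_prod n t"
        using P(1) by (intro mult_left_mono) auto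
      then have "x / shifted_prod n t \<le> \<bar>x\<bar>"
        using P(1) by (simp add: pos_divide_le_eq)
      then have "slice_mass m (x / shifted_prod n t) \<le> slice_mass m \<bar>x\<bar>"
        by (rule slice_mass_mono[OF assms])
      then have "slice_integrand n m x t \<le> powr_weight n m t * slice_mass m \<bar>x\<bar>"
        unfolding slice_integrand_def by (intro mult_left_mono powr_weight_nonneg)
      then show ?thesis
        using True P slice_integrand_nonneg[OF assms]
        by (simp add: powr_weight_eq_prod_Icc mult.commute)
    next
      case False
      then have "slice_integrand n m x t = 0"
        unfolding slice_integrand_def
        by (metis mult_zero_left mult_zero_right not_less powr_weight_eq_0 slice_mass_eq_0)
      then show ?thesis using bound_nonneg by simp
    qed
  qed
qed simp

lemma integral_slice_integrand_pos:
  assumes "m > 0" "x > 1"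
  shows "0 < (\<integral>t. slice_integrand n m x t \<partial>(\<Pi>\<^sub>M k\<in>{..<n}. lborel))"
proof -
  define \<delta> where "\<delta> = x powr (1 / (real n + 1)) - 1"
  have \<delta>_pos: "\<delta> > 0" unfolding \<delta>_def using assms by (simp add: gr_one_powr)
  have "(1 + \<delta>) ^ n = x powr (real n / (real n + 1))"
    unfolding \<delta>_def using assms by (simp add: powr_realpow[symmetric] powr_powr)
  also have "\<dots> < x powr 1"
    using assms by (intro powr_less_mono) (auto simp: divide_less_eq)
  also have "\<dots> = x"
    using assms by simp
  finally have \<delta>_small: "(1 + \<delta>) ^ n < x" .
  define B where "B = Pi\<^sub>E {..<n} (\<lambda>_. {0<..<\<delta>})"
  show ?thesis
  proof (rule integral_pos_of_pos_on_nonnull)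
    show "integrable (\<Pi>\<^sub>M k\<in>{..<n}. lborel) (slice_integrand n m x)"
      using assms(1) by (rule integrable_slice_integrand)
    show "0 \<le> slice_integrand n m x t" for t
      using assms(1) by (rule slice_integrand_nonneg)
    show "B \<in> sets (\<Pi>\<^sub>M k\<in>{..<n}. lborel)"
      unfolding B_def by (intro sets_PiM_I_finite) auto
    have "emeasure (\<Pi>\<^sub>M k\<in>{..<n}. lborel) B = ennreal \<delta> ^ n"
      unfolding B_def using \<delta>_pos by (subst lborel_PiM.emeasure_PiM) auto
    then show "emeasure (\<Pi>\<^sub>M k\<in>{..<n}. lborel) B \<noteq> 0"
      using \<delta>_pos by simp
    fix t assume "t \<in> B"
    have t: "0 < t k" "t k < \<delta>" if "k < n" for k
      using PiE_mem[OF \<open>t \<in> B\<close>[unfolded B_def], of k] that by auto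
    have "shifted_prod n t \<le> (\<Prod>k<n. 1 + \<delta>)"
      unfolding shifted_prod_def using t by (intro prod_mono) (fastforce intro: less_imp_le)
    then have "shifted_prod n t < x"
      using \<delta>_small by simp
    moreover have "1 \<le> shifted_prod n t"
      using t(1) by (intro shifted_prod_ge_1) (simp add: order.strict_implies_order)
    ultimately have "1 < x / shifted_prod n t"
      by (simp add: less_divide_eq)
    moreover have "0 < powr_weight n m t"
      unfolding powr_weight_def using t(1) by (intro prod_pos) (force simp: indicator_def)
    ultimately show "0 < slice_integrand n m x t"
      unfolding slice_integrand_def using slice_mass_pos assms(1) by simp
  qed
qed

lemma convex_on_slice_mass_comp:
  assumes "m \<ge> 1" "convex_on S f"
  shows "convex_on S (\<lambda>x. slice_mass m (f x))"
proof -
  have "convex_on S (\<lambda>x. max (f x - 1) 0)"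
    by (rule convex_on_compose_mono_on[OF assms(2) _ convex_UNIV convex_on_max_diff_0])
      (auto intro: mono_onI)
  then have "convex_on S (\<lambda>x. max (f x - 1) 0 powr m)"
    by (rule convex_on_compose_mono_on[where T = "{0..}"])
      (use assms(1) in \<open>auto intro!: convex_on_powr_nonneg mono_onI powr_mono2\<close>)
  then show ?thesis
    unfolding slice_mass_def using assms(1) by (intro convex_on_cdiv) auto
qed

lemma convex_on_slice_integrand_two_powr:
  assumes "m \<ge> 1"
  shows "convex_on UNIV (\<lambda>R. slice_integrand n m (2 powr R) t)"
proof (cases "\<forall>k<n. 0 \<le> t k")
  case True
  then have "0 \<le> shifted_prod n t" using shifted_prod_ge_1[of n t] by simp
  then have "convex_on UNIV (\<lambda>R. slice_mass m (2 powr R / shifted_prod n t))"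
    by (intro convex_on_slice_mass_comp[OF assms] convex_on_cdiv convex_on_two_powr)
  then show ?thesis
    unfolding slice_integrand_def by (intro convex_on_cmul powr_weight_nonneg)
qed (simp add: slice_integrand_def powr_weight_eq_0 convex_on_const)

lemma mono_slice_integrand_two_powr:
  assumes "m > 0"
  shows "mono_on UNIV (\<lambda>R. slice_integrand n m (2 powr R) t)"
proof (cases "\<forall>k<n. 0 \<le> t k")
  case True
  then have P: "0 < shifted_prod n t" using shifted_prod_ge_1[of n t] by simp
  show ?thesis
  proof (rule mono_onI)
    fix R R' :: real assume "R \<le> R'"
    then have "2 powr R / shifted_prod n t \<le> 2 powr R' / shifted_prod n t"
      using P by (simp add: divide_right_mono)
    then show "slice_integrand n m (2 powr R) t \<le> slice_integrand n m (2 powr R') t"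
      unfolding slice_integrand_def using assms
      by (intro mult_left_mono powr_weight_nonneg slice_mass_mono)
  qed
qed (simp add: slice_integrand_def powr_weight_eq_0 mono_onI)

theorem lemma4:
  fixes K :: nat and m :: real
  assumes "K \<ge> 1" and "m > 0"
  shows "mono_on {0<..} (\<lambda>R. g0 K m (2 powr R))
    \<and> (m \<ge> 1 \<longrightarrow> convex_on {0<..} (\<lambda>R. g0 K m (2 powr R)))
    \<and> antimono_on {0<..} (\<lambda>R. (g0 K m (2 powr R)) powr (- 1 / (m * real K)))"
proof -
  obtain n where K: "K = Suc n" using assms(1) by (cases K) auto
  define G where "G R = g0 K m (2 powr R)" for R
  have G_eq: "G = (\<lambda>R. \<integral>t. slice_integrand n m (2 powr R) t \<partial>(\<Pi>\<^sub>M k\<in>{..<n}. lborel))"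
    unfolding G_def K g0_Suc_eq_integral_slice_integrand[OF assms(2)] ..
  have integrable: "integrable (\<Pi>\<^sub>M k\<in>{..<n}. lborel) (slice_integrand n m (2 powr R))" for R
    using assms(2) by (rule integrable_slice_integrand)
  have mono: "mono_on {0<..} G"
    unfolding G_eq using integrable mono_slice_integrand_two_powr[OF assms(2)]
    by (intro mono_on_integral) (auto intro: mono_on_subset)
  have "convex_on {0<..} G" if "m \<ge> 1"
    unfolding G_eq using integrable convex_on_slice_integrand_two_powr[OF that]
    by (intro convex_on_integral) (auto intro: convex_on_subset)
  moreover have "0 < G R" if "R > 0" for R
    unfolding G_eq using assms(2) that by (intro integral_slice_integrand_pos) auto
  then have "antimono_on {0<..} (\<lambda>R. G R powr (- 1 / (m * real K)))"
    using assms by (intro antimono_on_powr_nonpos[OF mono]) (auto simp: divide_nonpos_pos)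
  ultimately show ?thesis
    using mono unfolding G_def by blast
qed

end
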